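(* Suppose the conditional gradient algorithm chooses $\theta_k$ by the exact line search $\theta_k\in\arg\min_{\theta\in[0,1]}\{(1-\theta)\mathrm{gap}(x_k,g_k)+\mathcal D(x_k,s_k,\theta)\}$ and $(\mathcal D,\mathrm{gap})$ satisfies the $(q,0)$-growth property for some $q>1$ and $M>0$, i.e. $\mathcal D(x,s,\theta)\le M\theta^q/q$ for all $x\in\mathrm{dom}(\Psi)$, $s\in\partial\Psi^*(-\nabla f(x))$, $\theta\in[0,1]$. Then $\mathrm{gap}_1\le M/q$ and for all $k\ge1$ \[ \mathrm{gap}_k\le M\Big(\frac{q}{k-1+q^{\frac{q}{q-1}}}\Big)^{q-1}. \] In particular, for $q=2$, $\mathrm{gap}_k\le \frac{2M}{k+3}$ for all $k\ge1$.
   Context: Let $f,\Psi:\mathbb{R}^n\to\mathbb{R}\cup\{\infty\}$ be closed proper convex functions such that (A1) $f$ is differentiable on $\mathrm{dom}(\Psi)$, and (A2) for every $x\in\mathrm{dom}(f)$ the set $\arg\min_s\{\langle\nabla f(x),s\rangle+\Psi(s)\}$ is nonempty. $f^*,\Psi^*$ denote convex conjugates; $\arg\min_y\{\langle g,y\rangle+\Psi(y)\}=\partial\Psi^*(-g)$. $D_f(y,x)=f(y)-f(x)-\langle\nabla f(x),y-x\rangle$. Duality gap: $\mathrm{gap}(x,u)=f(x)+\Psi(x)+f^*(u)+\Psi^*(-u)$ for $x\in\mathrm{dom}(\Psi)$, $u\in\mathrm{dom}(f^* )$. For $x,s\in\mathrm{dom}(\Psi)$, $\theta\in[0,1]$: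 $\mathcal{D}(x,s,\theta)=D_f(x+\theta(s-x),x)+\Psi(x+\theta(s-x))-(1-\theta)\Psi(x)-\theta\Psi(s)$. Conditional gradient algorithm: given $x_0\in\mathrm{dom}(\Psi)$, for $k=0,1,2,\dots$ let $g_k=\nabla f(x_k)$, pick $s_k\in\arg\min_y\{\langle g_k,y\rangle+\Psi(y)\}$ and $\theta_k\in[0,1]$, and set $x_{k+1}=(1-\theta_k)x_k+\theta_k s_k$. The best duality gaps are $\mathrm{gap}_k=\min_{i=0,\dots,k}\mathrm{gap}(x_k,g_i)$. *)

theory Defs
  imports "HOL-Analysis.Analysis"
begin

definition edom :: "('a \<Rightarrow> ereal) \<Rightarrow> 'a set" where
  "edom f = {x. f x < \<infinity>}"

definition proper_fun :: "('a \<Rightarrow> ereal) \<Rightarrow> bool" where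
  "proper_fun f \<longleftrightarrow> (\<exists>x. f x < \<infinity>) \<and> (\<forall>x. f x > -\<infinity>)"

definition convex_efun :: "('a::real_vector \<Rightarrow> ereal) \<Rightarrow> bool" where
  "convex_efun f \<longleftrightarrow> convex {(x, t::real). f x \<le> ereal t}"

definition closed_efun :: "('a::topological_space \<Rightarrow> ereal) \<Rightarrow> bool" where
  "closed_efun f \<longleftrightarrow> closed {(x, t::real). f x \<le> ereal t}"

definition closed_proper_convex :: "('a::real_normed_vector \<Rightarrow> ereal) \<Rightarrow> bool" where
  "closed_proper_convex f \<longleftrightarrow> closed_efun f \<and> proper_fun f \<and> convex_efun f"

definition fconj :: "('a::real_inner \<Rightarrow> ereal) \<Rightarrow> 'a \<Rightarrow> ereal" where
  "fconj f u = (SUP x. ereal (u \<bullet> x) - f x)"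

text \<open>arg min_y { <g,y> + Psi y } (equal to the subdifferential of Psi^* at -g).\<close>
definition lin_argmin :: "('a::real_inner \<Rightarrow> ereal) \<Rightarrow> 'a \<Rightarrow> 'a set" where
  "lin_argmin Psi g = {s. \<forall>y. ereal (g \<bullet> s) + Psi s \<le> ereal (g \<bullet> y) + Psi y}"

definition bregman :: "('a::real_inner \<Rightarrow> ereal) \<Rightarrow> ('a \<Rightarrow> 'a) \<Rightarrow> 'a \<Rightarrow> 'a \<Rightarrow> ereal" where
  "bregman f gradf y x = f y - f x - ereal (gradf x \<bullet> (y - x))"

definition gap :: "('a::real_inner \<Rightarrow> ereal) \<Rightarrow> ('a \<Rightarrow> ereal) \<Rightarrow> 'a \<Rightarrow> 'a \<Rightarrow> ereal" where
  "gap f Psi x u = f x + Psi x + fconj f u + fconj Psi (- u)"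

definition Dcal :: "('a::real_inner \<Rightarrow> ereal) \<Rightarrow> ('a \<Rightarrow> 'a) \<Rightarrow> ('a \<Rightarrow> ereal)
    \<Rightarrow> 'a \<Rightarrow> 'a \<Rightarrow> real \<Rightarrow> ereal" where
  "Dcal f gradf Psi x s \<theta> =
     bregman f gradf (x + \<theta> *\<^sub>R (s - x)) x + Psi (x + \<theta> *\<^sub>R (s - x))
       - ereal (1 - \<theta>) * Psi x - ereal \<theta> * Psi s"

definition best_gap :: "('a::real_inner \<Rightarrow> ereal) \<Rightarrow> ('a \<Rightarrow> 'a) \<Rightarrow> ('a \<Rightarrow> ereal)
    \<Rightarrow> (nat \<Rightarrow> 'a) \<Rightarrow> nat \<Rightarrow> ereal" where
  "best_gap f gradf Psi x k = Min ((\<lambda>i. gap f Psi (x k) (gradf (x i))) ` {0..k})"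

end

theory Submission
  imports Defs
begin

text \<open>With \<open>g = \<nabla>f(x)\<close> and \<open>s\<close> a linear minimiser, moving from \<open>x\<close> to \<open>x + \<theta>(s - x)\<close> changes
  the gap exactly: \<open>gap(x + \<theta>(s - x), g) = (1 - \<theta>) gap(x, g) + \<D>(x, s, \<theta>)\<close>. Exact line search
  and the growth bound therefore give \<open>gap(x\<^sub>k\<^sub>+\<^sub>1, g\<^sub>k) \<le> (1 - t) gap(x\<^sub>k, g\<^sub>k) + M t^q/q\<close> for every
  \<open>t \<in> [0,1]\<close>. Since \<open>gap(x, u)\<close> is a primal term in \<open>x\<close> plus a dual term in \<open>u\<close>, the best gaps
  obey the same recursion, and the rate follows by induction, taking \<open>t = q/(k - 1 + q^(q/(q-1)))\<close>
  in step \<open>k\<close>.\<close>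

lemma convex_efun_combination_le:
  fixes f :: "'a::real_vector \<Rightarrow> ereal"
  assumes "convex_efun f" "f a \<le> ereal ra" "f b \<le> ereal rb" "0 \<le> t" "t \<le> 1"
  shows "f ((1 - t) *\<^sub>R a + t *\<^sub>R b) \<le> ereal ((1 - t) * ra + t * rb)"
proof -
  have "(1 - t) *\<^sub>R (a, ra) + t *\<^sub>R (b, rb) \<in> {(x, t::real). f x \<le> ereal t}"
    using assms by (intro convexD[of "{(x, t). f x \<le> ereal t}"]) (auto simp: convex_efun_def)
  then show ?thesis by simp
qed

lemma edom_ereal_bound:
  assumes "a \<in> edom f"
  obtains r where "f a \<le> ereal r"
  using assms unfolding edom_def by (cases "f a") auto

lemma convex_edom:
  fixes f :: "'a::real_vector \<Rightarrow> ereal"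
  assumes "convex_efun f"
  shows "convex (edom f)"
proof (rule convexI)
  fix a b and u v :: real
  assume ab: "a \<in> edom f" "b \<in> edom f" and uv: "0 \<le> u" "0 \<le> v" "u + v = 1"
  obtain ra rb where "f a \<le> ereal ra" "f b \<le> ereal rb"
    using ab by (meson edom_ereal_bound)
  then have "f ((1 - v) *\<^sub>R a + v *\<^sub>R b) \<le> ereal ((1 - v) * ra + v * rb)"
    using uv by (intro convex_efun_combination_le[OF assms]) auto
  moreover have "u = 1 - v" using uv by simp
  ultimately show "u *\<^sub>R a + v *\<^sub>R b \<in> edom f"
    unfolding edom_def using le_less_trans by fastforce
qed

lemma proper_fun_finite:
  assumes "proper_fun f" "a \<in> edom f"
  shows "f a = ereal (real_of_ereal (f a))"
  using assms unfolding proper_fun_def edom_def by (cases "f a") auto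

lemma lin_argmin_subset_edom:
  assumes "proper_fun Psi"
  shows "lin_argmin Psi g \<subseteq> edom Psi"
proof
  fix s assume s: "s \<in> lin_argmin Psi g"
  obtain y where y: "Psi y < \<infinity>" using assms unfolding proper_fun_def by blast
  have "ereal (g \<bullet> s) + Psi s \<le> ereal (g \<bullet> y) + Psi y"
    using s unfolding lin_argmin_def by blast
  also have "\<dots> < \<infinity>" using y by simp
  finally show "s \<in> edom Psi" unfolding edom_def by auto
qed

lemma convex_efun_gradient_inequality:
  fixes f :: "'a::real_inner \<Rightarrow> ereal"
  assumes cvx: "convex_efun f" and no_MInf: "\<forall>x. f x > -\<infinity>"
    and fy: "f y = ereal Fy" and fw: "f w = ereal Fw"
    and der: "((\<lambda>z. real_of_ereal (f z)) has_derivative (\<lambda>h. g \<bullet> h)) (at y)"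
  shows "Fy + g \<bullet> (w - y) \<le> Fw"
proof -
  define F where "F = (\<lambda>z. real_of_ereal (f z))"
  define d where "d = w - y"
  have "((\<lambda>t. y + t *\<^sub>R d) has_derivative (\<lambda>h. h *\<^sub>R d)) (at 0)"
    by (auto intro!: derivative_eq_intros)
  then have "((\<lambda>t. F (y + t *\<^sub>R d)) has_derivative (\<lambda>h. g \<bullet> (h *\<^sub>R d))) (at 0)"
    using has_derivative_compose[of "\<lambda>t. y + t *\<^sub>R d" "\<lambda>h. h *\<^sub>R d" 0 UNIV F "\<lambda>h. g \<bullet> h"] der
    by (simp add: F_def)
  then have "((\<lambda>t. F (y + t *\<^sub>R d)) has_field_derivative (g \<bullet> d)) (at 0)"
    unfolding has_field_derivative_def by (rule has_derivative_eq_rhs) (auto simp: mult.commute)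
  then have "((\<lambda>h. (F (y + h *\<^sub>R d) - F y) / h) \<longlongrightarrow> g \<bullet> d) (at 0)"
    unfolding DERIV_def by simp
  then have lim: "((\<lambda>h. (F (y + h *\<^sub>R d) - F y) / h) \<longlongrightarrow> g \<bullet> d) (at_right 0)"
    by (rule filterlim_mono) (auto simp: at_le)
  have "eventually (\<lambda>h. h \<in> {0<..<(1::real)}) (at_right 0)"
    by (rule eventually_at_right_real) simp
  then have "eventually (\<lambda>h. (F (y + h *\<^sub>R d) - F y) / h \<le> Fw - Fy) (at_right 0)"
  proof (rule eventually_mono)
    fix h :: real assume h: "h \<in> {0<..<1}"
    have "y + h *\<^sub>R d = (1 - h) *\<^sub>R y + h *\<^sub>R w" by (simp add: d_def algebra_simps)
    then have "f (y + h *\<^sub>R d) \<le> ereal ((1 - h) * Fy + h * Fw)"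
      using convex_efun_combination_le[OF cvx, of y Fy w Fw h] h fy fw by auto
    then have "F (y + h *\<^sub>R d) \<le> (1 - h) * Fy + h * Fw"
      using no_MInf[rule_format, of "y + h *\<^sub>R d"] unfolding F_def
      by (cases "f (y + h *\<^sub>R d)") auto
    then show "(F (y + h *\<^sub>R d) - F y) / h \<le> Fw - Fy"
      using h fy by (simp add: F_def divide_simps algebra_simps)
  qed
  then have "g \<bullet> d \<le> Fw - Fy"
    by (rule tendsto_upperbound[OF lim]) simp
  then show ?thesis by (simp add: d_def)
qed

lemma fconj_at_gradient:
  fixes f :: "'a::real_inner \<Rightarrow> ereal"
  assumes cvx: "convex_efun f" and no_MInf: "\<forall>x. f x > -\<infinity>" and fy: "f y = ereal Fy"
    and der: "((\<lambda>z. real_of_ereal (f z)) has_derivative (\<lambda>h. g \<bullet> h)) (at y)"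
  shows "fconj f g = ereal (g \<bullet> y - Fy)"
  unfolding fconj_def
proof (rule antisym)
  show "(SUP w. ereal (g \<bullet> w) - f w) \<le> ereal (g \<bullet> y - Fy)"
  proof (rule SUP_least)
    fix w
    show "ereal (g \<bullet> w) - f w \<le> ereal (g \<bullet> y - Fy)"
    proof (cases "f w")
      case (real Fw)
      then have "Fy + g \<bullet> (w - y) \<le> Fw"
        using convex_efun_gradient_inequality[OF cvx no_MInf fy _ der] by blast
      then show ?thesis using real by (simp add: inner_diff_right)
    qed (use no_MInf in auto)
  qed
  show "ereal (g \<bullet> y - Fy) \<le> (SUP w. ereal (g \<bullet> w) - f w)"
    using SUP_upper[of y UNIV "\<lambda>w. ereal (g \<bullet> w) - f w"] fy by simp
qed

lemma fconj_uminus_at_lin_argmin: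
  fixes Psi :: "'a::real_inner \<Rightarrow> ereal"
  assumes s: "s \<in> lin_argmin Psi g" and no_MInf: "\<forall>x. Psi x > -\<infinity>" and ps: "Psi s = ereal Ps"
  shows "fconj Psi (- g) = ereal (- (g \<bullet> s) - Ps)"
  unfolding fconj_def
proof (rule antisym)
  show "(SUP w. ereal (- g \<bullet> w) - Psi w) \<le> ereal (- (g \<bullet> s) - Ps)"
  proof (rule SUP_least)
    fix w
    have min: "ereal (g \<bullet> s) + Psi s \<le> ereal (g \<bullet> w) + Psi w"
      using s unfolding lin_argmin_def by blast
    show "ereal (- g \<bullet> w) - Psi w \<le> ereal (- (g \<bullet> s) - Ps)"
    proof (cases "Psi w")
      case (real Pw)
      then have "g \<bullet> s + Ps \<le> g \<bullet> w + Pw" using min ps by simp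
      then show ?thesis using real by simp
    qed (use no_MInf in auto)
  qed
  show "ereal (- (g \<bullet> s) - Ps) \<le> (SUP w. ereal (- g \<bullet> w) - Psi w)"
    using SUP_upper[of s UNIV "\<lambda>w. ereal (- g \<bullet> w) - Psi w"] ps by simp
qed

lemma gap_along_segment:
  assumes "f y = ereal Fy" "f z = ereal Fz" "Psi y = ereal Py" "Psi z = ereal Pz" "Psi s = ereal Ps"
    and "fconj f (gradf y) = ereal (gradf y \<bullet> y - Fy)"
    and "fconj Psi (- gradf y) = ereal (- (gradf y \<bullet> s) - Ps)"
    and z: "z = y + \<theta> *\<^sub>R (s - y)"
  shows "gap f Psi z (gradf y) = ereal (1 - \<theta>) * gap f Psi y (gradf y) + Dcal f gradf Psi y s \<theta>"
proof -
  have "gradf y \<bullet> (z - y) = \<theta> * (gradf y \<bullet> s - gradf y \<bullet> y)"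
    by (simp add: z inner_diff_right)
  then show ?thesis
    using assms(1-7) unfolding gap_def Dcal_def bregman_def z[symmetric]
    by (simp add: algebra_simps)
qed

lemma prefix_Min_recursion:
  fixes phi d :: "nat \<Rightarrow> real"
  assumes step: "phi (Suc k) + d k \<le> (1 - t) * (phi k + d k) + c" and t: "0 \<le> t" "t \<le> 1"
  shows "phi (Suc k) + Min (d ` {0..Suc k}) \<le> (1 - t) * (phi k + Min (d ` {0..k})) + c"
proof -
  have "Min (d ` {0..Suc k}) \<le> Min (d ` {0..k})" by (rule Min_antimono) auto
  moreover have "t * Min (d ` {0..k}) \<le> t * d k" using t by (intro mult_left_mono) auto
  ultimately show ?thesis
    using step by (simp only: algebra_simps)
qed

lemma one_plus_powr_mult_le_one:
  fixes x a :: real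
  assumes "x > 0" "a > 0" "a * x \<le> 1"
  shows "(1 + x) powr a * (1 - a * x) \<le> 1"
proof -
  have "(1 + x) powr a = exp (a * ln (1 + x))" using assms by (simp add: powr_def)
  also have "\<dots> \<le> exp (a * x)"
    using ln_add_one_self_le_self[of x] assms by (simp add: mult_left_mono)
  finally have "(1 + x) powr a * (1 - a * x) \<le> exp (a * x) * exp (- (a * x))"
    using exp_ge_add_one_self[of "- (a * x)"] assms by (intro mult_mono) auto
  also have "\<dots> = 1" by (simp add: exp_minus)
  finally show ?thesis .
qed

lemma rate_at_start:
  fixes q :: real
  assumes "q > 1"
  shows "(q / q powr (q / (q - 1))) powr (q - 1) = 1 / q"
proof -
  have "(q powr (q / (q - 1))) powr (q - 1) = q powr q"
    using assms by (simp add: powr_powr)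
  then have "(q / q powr (q / (q - 1))) powr (q - 1) = q powr (q - 1) / q powr q"
    using assms by (simp add: powr_divide)
  also have "\<dots> = 1 / q" using assms by (simp add: powr_diff)
  finally show ?thesis .
qed

lemma rate_step:
  fixes q u M :: real
  assumes q: "q > 1" and u: "u \<ge> q" and M: "M > 0"
  shows "(1 - q / u) * (M * (q / u) powr (q - 1)) + M * (q / u) powr q / q
    \<le> M * (q / (u + 1)) powr (q - 1)"
proof -
  define t where "t = q / u"
  have u0: "u > 0" using q u by simp
  have "t = (q / (u + 1)) * (1 + 1 / u)" using u0 by (simp add: t_def divide_simps)
  then have t_split: "t powr (q - 1) = (q / (u + 1)) powr (q - 1) * (1 + 1 / u) powr (q - 1)"
    by (simp only: powr_mult)
  have "t powr q = t powr (q - 1) * t"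
    using q u0 by (simp add: t_def powr_diff)
  then have "(1 - t) * (M * t powr (q - 1)) + M * t powr q / q
      = M * t powr (q - 1) * (1 - (q - 1) / u)"
    using q u0 by (simp add: t_def field_simps)
  also have "\<dots> = M * (q / (u + 1)) powr (q - 1) * ((1 + 1 / u) powr (q - 1) * (1 - (q - 1) * (1 / u)))"
    by (simp add: t_split)
  also have "\<dots> \<le> M * (q / (u + 1)) powr (q - 1) * 1"
    using q u M by (intro mult_left_mono one_plus_powr_mult_le_one) (auto simp: field_simps)
  finally show ?thesis by (simp add: t_def)
qed

lemma recursion_rate:
  fixes a :: "nat \<Rightarrow> real" and q M :: real
  assumes q: "q > 1" and M: "M > 0"
    and rec: "\<forall>k. \<forall>t\<in>{0..1}. a (Suc k) \<le> (1 - t) * a k + M * t powr q / q"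
    and k: "k \<ge> 1"
  shows "a k \<le> M * (q / (real k - 1 + q powr (q / (q - 1)))) powr (q - 1)"
  using k
proof (induction k rule: nat_induct_at_least)
  case base
  have "a 1 \<le> M / q" using bspec[OF spec[OF rec, of 0], of 1] by simp
  then show ?case using rate_at_start[OF q] by simp
next
  case (Suc k)
  define u where "u = real k - 1 + q powr (q / (q - 1))"
  have "q powr 1 \<le> q powr (q / (q - 1))"
    using q by (intro powr_mono) (auto simp: field_simps)
  then have u: "u \<ge> q" using q Suc.hyps by (simp add: u_def)
  have t: "q / u \<in> {0..1}" using q u by auto
  have "a (Suc k) \<le> (1 - q / u) * a k + M * (q / u) powr q / q"
    using rec t by blast
  also have "\<dots> \<le> (1 - q / u) * (M * (q / u) powr (q - 1)) + M * (q / u) powr q / q"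
    using Suc.IH t by (intro add_right_mono mult_left_mono) (auto simp: u_def)
  also have "\<dots> \<le> M * (q / (u + 1)) powr (q - 1)"
    by (rule rate_step[OF q u M])
  finally show ?case by (simp add: u_def)
qed

lemma iterates_in_convex:
  assumes "convex C" "x 0 \<in> C" "\<forall>k. s k \<in> C" "\<forall>k. \<theta> k \<in> {0..1}"
    and "\<forall>k. x (Suc k) = (1 - \<theta> k) *\<^sub>R x k + \<theta> k *\<^sub>R s k"
  shows "x k \<in> C"
  by (induction k) (use assms in \<open>auto intro: convexD_alt\<close>)

lemma best_gap_eq_Min:
  assumes "\<forall>k j. gap f Psi (x k) (gradf (x j)) = ereal (phi k + d j)"
  shows "best_gap f gradf Psi x k = ereal (phi k + Min (d ` {0..k}))"
proof -
  have "best_gap f gradf Psi x k = Min ((\<lambda>e. ereal (phi k + e)) ` d ` {0..k})"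
    unfolding best_gap_def using assms by (simp add: image_image)
  also have "\<dots> = ereal (phi k + Min (d ` {0..k}))"
    by (rule mono_Min_commute[symmetric]) (auto simp: mono_def)
  finally show ?thesis .
qed

lemma conditional_gradient_best_gap_recursion:
  fixes f Psi :: "'a::real_inner \<Rightarrow> ereal" and gradf :: "'a \<Rightarrow> 'a"
    and x s :: "nat \<Rightarrow> 'a" and \<theta> :: "nat \<Rightarrow> real" and bound :: "real \<Rightarrow> real"
  assumes f_cvx: "convex_efun f" and f_proper: "proper_fun f" and Psi_proper: "proper_fun Psi"
    and diff: "\<forall>y\<in>edom Psi. y \<in> interior (edom f) \<and>
               ((\<lambda>z. real_of_ereal (f z)) has_derivative (\<lambda>h. gradf y \<bullet> h)) (at y)"
    and x_dom: "\<forall>k. x k \<in> edom Psi"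
    and s_choice: "\<forall>k. s k \<in> lin_argmin Psi (gradf (x k))"
    and line_search: "\<forall>k. \<forall>t\<in>{0..1}.
          ereal (1 - \<theta> k) * gap f Psi (x k) (gradf (x k)) + Dcal f gradf Psi (x k) (s k) (\<theta> k)
          \<le> ereal (1 - t) * gap f Psi (x k) (gradf (x k)) + Dcal f gradf Psi (x k) (s k) t"
    and update: "\<forall>k. x (Suc k) = (1 - \<theta> k) *\<^sub>R x k + \<theta> k *\<^sub>R s k"
    and growth: "\<forall>k. \<forall>t\<in>{0..1}. Dcal f gradf Psi (x k) (s k) t \<le> ereal (bound t)"
  shows "\<exists>a. (\<forall>k. best_gap f gradf Psi x k = ereal (a k))
            \<and> (\<forall>k. \<forall>t\<in>{0..1}. a (Suc k) \<le> (1 - t) * a k + bound t)"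
proof -
  have f_MInf: "\<forall>z. f z > -\<infinity>" and Psi_MInf: "\<forall>z. Psi z > -\<infinity>"
    using f_proper Psi_proper unfolding proper_fun_def by auto
  define F where "F z = real_of_ereal (f z)" for z
  define P where "P z = real_of_ereal (Psi z)" for z
  define g where "g k = gradf (x k)" for k
  \<comment> \<open>\<open>gap(x\<^sub>k, g\<^sub>j) = phi k + d j\<close> by the Fenchel-Young equalities at the gradient and at the minimiser\<close>
  define phi where "phi k = F (x k) + P (x k)" for k
  define d where "d j = g j \<bullet> (x j - s j) - F (x j) - P (s j)" for j
  have s_dom: "s k \<in> edom Psi" for k
    using lin_argmin_subset_edom[OF Psi_proper] s_choice by blast
  have F_x: "f (x k) = ereal (F (x k))" for k
    using proper_fun_finite[OF f_proper] diff x_dom interior_subset unfolding F_def by blast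
  have P_x: "Psi (x k) = ereal (P (x k))" and P_s: "Psi (s k) = ereal (P (s k))" for k
    using proper_fun_finite[OF Psi_proper] x_dom s_dom unfolding P_def by blast+
  have conj_f: "fconj f (g k) = ereal (g k \<bullet> x k - F (x k))" for k
    using fconj_at_gradient[OF f_cvx f_MInf F_x] diff x_dom unfolding g_def by blast
  have conj_Psi: "fconj Psi (- g k) = ereal (- (g k \<bullet> s k) - P (s k))" for k
    using fconj_uminus_at_lin_argmin[OF _ Psi_MInf P_s] s_choice unfolding g_def by blast
  have gap_split: "\<forall>k j. gap f Psi (x k) (g j) = ereal (phi k + d j)"
    unfolding gap_def F_x P_x conj_f conj_Psi phi_def d_def by (simp add: inner_diff_right)
  have "phi (Suc k) + d k \<le> (1 - t) * (phi k + d k) + bound t" if t: "t \<in> {0..1}" for k t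
  proof -
    have x_next: "x (Suc k) = x k + \<theta> k *\<^sub>R (s k - x k)"
      using update by (simp add: algebra_simps)
    have "ereal (phi (Suc k) + d k) = gap f Psi (x (Suc k)) (g k)"
      using gap_split by simp
    also have "\<dots> = ereal (1 - \<theta> k) * gap f Psi (x k) (g k) + Dcal f gradf Psi (x k) (s k) (\<theta> k)"
      using gap_along_segment[where f=f and Psi=Psi and gradf=gradf and y="x k", OF F_x[of k] F_x[of "Suc k"] P_x[of k] P_x[of "Suc k"] P_s[of k]
          conj_f[of k, unfolded g_def] conj_Psi[of k, unfolded g_def] x_next]
      unfolding g_def .
    also have "\<dots> \<le> ereal (1 - t) * gap f Psi (x k) (g k) + Dcal f gradf Psi (x k) (s k) t"
      using line_search t unfolding g_def by blast
    also have "\<dots> \<le> ereal (1 - t) * gap f Psi (x k) (g k) + ereal (bound t)"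
      using growth t by (intro add_left_mono) blast
    finally show ?thesis using gap_split by (simp add: algebra_simps)
  qed
  then have "\<forall>k. \<forall>t\<in>{0..1}. phi (Suc k) + Min (d ` {0..Suc k})
      \<le> (1 - t) * (phi k + Min (d ` {0..k})) + bound t"
    by (auto intro: prefix_Min_recursion)
  moreover have "best_gap f gradf Psi x k = ereal (phi k + Min (d ` {0..k}))" for k
    using best_gap_eq_Min gap_split unfolding g_def by blast
  ultimately show ?thesis
    by (intro exI[of _ "\<lambda>k. phi k + Min (d ` {0..k})"]) simp
qed

theorem mainTheorem4:
  fixes f Psi :: "'a::euclidean_space \<Rightarrow> ereal"
    and gradf :: "'a \<Rightarrow> 'a"
    and x s :: "nat \<Rightarrow> 'a"
    and \<theta> :: "nat \<Rightarrow> real"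
    and q M :: real
  assumes f_cpc: "closed_proper_convex f"
    and Psi_cpc: "closed_proper_convex Psi"
    and A1: "\<forall>y\<in>edom Psi. y \<in> interior (edom f) \<and>
               ((\<lambda>z. real_of_ereal (f z)) has_derivative (\<lambda>h. gradf y \<bullet> h)) (at y)"
    and A2: "\<forall>y\<in>edom Psi. lin_argmin Psi (gradf y) \<noteq> {}"
    and x0: "x 0 \<in> edom Psi"
    and s_choice: "\<forall>k. s k \<in> lin_argmin Psi (gradf (x k))"
    and theta_range: "\<forall>k. \<theta> k \<in> {0..1}"
    and line_search: "\<forall>k. \<forall>t\<in>{0..1}.
          ereal (1 - \<theta> k) * gap f Psi (x k) (gradf (x k)) + Dcal f gradf Psi (x k) (s k) (\<theta> k)
          \<le> ereal (1 - t) * gap f Psi (x k) (gradf (x k)) + Dcal f gradf Psi (x k) (s k) t"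
    and update: "\<forall>k. x (Suc k) = (1 - \<theta> k) *\<^sub>R x k + \<theta> k *\<^sub>R s k"
    and q_gt: "q > 1"
    and M_pos: "M > 0"
    and growth: "\<forall>y\<in>edom Psi. \<forall>z\<in>lin_argmin Psi (gradf y). \<forall>t\<in>{0..1}.
          Dcal f gradf Psi y z t \<le> ereal (M * t powr q / q)"
  shows "best_gap f gradf Psi x 1 \<le> ereal (M / q)
    \<and> (\<forall>k\<ge>1. best_gap f gradf Psi x k
          \<le> ereal (M * (q / (real k - 1 + q powr (q / (q - 1)))) powr (q - 1)))
    \<and> (q = 2 \<longrightarrow> (\<forall>k\<ge>1. best_gap f gradf Psi x k \<le> ereal (2 * M / (real k + 3))))"
proof -
  have f_cvx: "convex_efun f" and f_proper: "proper_fun f"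
    and Psi_cvx: "convex_efun Psi" and Psi_proper: "proper_fun Psi"
    using f_cpc Psi_cpc unfolding closed_proper_convex_def by auto
  have s_dom: "\<forall>k. s k \<in> edom Psi"
    using lin_argmin_subset_edom[OF Psi_proper] s_choice by blast
  have x_dom: "\<forall>k. x k \<in> edom Psi"
    using iterates_in_convex[OF convex_edom[OF Psi_cvx] x0 s_dom theta_range update] by blast
  have growth_iterates: "\<forall>k. \<forall>t\<in>{0..1}. Dcal f gradf Psi (x k) (s k) t \<le> ereal (M * t powr q / q)"
    using growth x_dom s_choice by blast
  obtain a where best: "\<forall>k. best_gap f gradf Psi x k = ereal (a k)"
    and rec: "\<forall>k. \<forall>t\<in>{0..1}. a (Suc k) \<le> (1 - t) * a k + M * t powr q / q"
    using conditional_gradient_best_gap_recursion[OF f_cvx f_proper Psi_proper A1 x_dom s_choice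
        line_search update growth_iterates] by blast
  have rate: "a k \<le> M * (q / (real k - 1 + q powr (q / (q - 1)))) powr (q - 1)" if "k \<ge> 1" for k
    using recursion_rate[OF q_gt M_pos rec that] .
  have "a 1 \<le> M / q" using bspec[OF spec[OF rec, of 0], of 1] by simp
  moreover have "(2::real) powr (2 / (2 - 1)) = 4" by simp
  ultimately show ?thesis using rate best by (auto simp: ac_simps)
qed

end
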